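(* Let $G$ be a graph containing a pendant block isomorphic to $K_r$ with $r\ge 3$, whose cutpoint is $v$. Then \[ |M_G|=\binom{r-1}{2}\,|M_{G-K_r}|+\sum_{p\in N(v)}|M_{G-(N[v]\cup N[p])}|, \] where $G-K_r$ denotes the graph obtained from $G$ by deleting all $r$ vertices of this block (including $v$).
   Context: Graphs are finite, simple, undirected. A block is a maximal $2$-connected subgraph; a pendant block is a block containing exactly one cutpoint of $G$. An induced matching is a matching whose endpoints induce a $1$-regular subgraph; it is maximal if not properly contained in another induced matching; $M_G$ is the set of maximal induced matchings of $G$ (a graph with no edges has exactly one, the empty matching). For $S\subseteq V(G)$, $G-S$ is the subgraph induced by $V(G)\setminus S$; $N(v)$, $N[v]$ are the open and closed neighborhoods. *)

theory Defs
  imports Main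
begin

text \<open>The induced subgraph
G - S is represented by the pair (V - S, E): all notions below only look at
E restricted to the given vertex set.\<close>

definition sgraph :: "'a set \<Rightarrow> ('a \<Rightarrow> 'a \<Rightarrow> bool) \<Rightarrow> bool" where
  "sgraph V E \<longleftrightarrow> finite V \<and> (\<forall>u w. E u w \<longrightarrow> u \<in> V \<and> w \<in> V \<and> u \<noteq> w \<and> E w u)"

definition edges :: "'a set \<Rightarrow> ('a \<Rightarrow> 'a \<Rightarrow> bool) \<Rightarrow> 'a set set" where
  "edges V E = {{u, w} | u w. u \<in> V \<and> w \<in> V \<and> E u w}"

definition nbhd :: "'a set \<Rightarrow> ('a \<Rightarrow> 'a \<Rightarrow> bool) \<Rightarrow> 'a \<Rightarrow> 'a set" where
  "nbhd V E v = {u \<in> V. E v u}"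

definition cnbhd :: "'a set \<Rightarrow> ('a \<Rightarrow> 'a \<Rightarrow> bool) \<Rightarrow> 'a \<Rightarrow> 'a set" where
  "cnbhd V E v = insert v (nbhd V E v)"

definition reach :: "'a set \<Rightarrow> ('a \<Rightarrow> 'a \<Rightarrow> bool) \<Rightarrow> 'a \<Rightarrow> 'a \<Rightarrow> bool" where
  "reach S E u w \<longleftrightarrow> u \<in> S \<and> (u, w) \<in> {(x, y). x \<in> S \<and> y \<in> S \<and> E x y}\<^sup>*"

definition connected_on :: "'a set \<Rightarrow> ('a \<Rightarrow> 'a \<Rightarrow> bool) \<Rightarrow> bool" where
  "connected_on S E \<longleftrightarrow> S \<noteq> {} \<and> (\<forall>u\<in>S. \<forall>w\<in>S. reach S E u w)"

definition two_connected :: "'a set \<Rightarrow> ('a \<Rightarrow> 'a \<Rightarrow> bool) \<Rightarrow> bool" where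
  "two_connected S E \<longleftrightarrow> card S \<ge> 3 \<and> finite S \<and> connected_on S E \<and>
     (\<forall>x\<in>S. connected_on (S - {x}) E)"

text \<open>A block (of size at least 3): a maximal 2-connected subgraph, given by its vertex set
(maximal 2-connected subgraphs are induced).\<close>
definition is_block :: "'a set \<Rightarrow> ('a \<Rightarrow> 'a \<Rightarrow> bool) \<Rightarrow> 'a set \<Rightarrow> bool" where
  "is_block V E B \<longleftrightarrow> B \<subseteq> V \<and> two_connected B E \<and>
     (\<forall>B'. B \<subset> B' \<and> B' \<subseteq> V \<longrightarrow> \<not> two_connected B' E)"

definition cutpoint :: "'a set \<Rightarrow> ('a \<Rightarrow> 'a \<Rightarrow> bool) \<Rightarrow> 'a \<Rightarrow> bool" where
  "cutpoint V E v \<longleftrightarrow> v \<in> V \<and> (\<exists>u\<in>V - {v}. \<exists>w\<in>V - {v}.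
      reach V E u w \<and> \<not> reach (V - {v}) E u w)"

definition pendant_block :: "'a set \<Rightarrow> ('a \<Rightarrow> 'a \<Rightarrow> bool) \<Rightarrow> 'a set \<Rightarrow> bool" where
  "pendant_block V E B \<longleftrightarrow> is_block V E B \<and> card {u \<in> B. cutpoint V E u} = 1"

definition is_clique :: "'a set \<Rightarrow> ('a \<Rightarrow> 'a \<Rightarrow> bool) \<Rightarrow> bool" where
  "is_clique B E \<longleftrightarrow> (\<forall>x\<in>B. \<forall>y\<in>B. x \<noteq> y \<longrightarrow> E x y)"

definition induced_matching :: "'a set \<Rightarrow> ('a \<Rightarrow> 'a \<Rightarrow> bool) \<Rightarrow> 'a set set \<Rightarrow> bool" where
  "induced_matching V E M \<longleftrightarrow> M \<subseteq> edges V E \<and>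
     (\<forall>e\<in>M. \<forall>f\<in>M. e \<noteq> f \<longrightarrow> e \<inter> f = {}) \<and>
     (\<forall>x\<in>\<Union>M. card {y \<in> \<Union>M. E x y} = 1)"

definition maximal_induced_matching :: "'a set \<Rightarrow> ('a \<Rightarrow> 'a \<Rightarrow> bool) \<Rightarrow> 'a set set \<Rightarrow> bool" where
  "maximal_induced_matching V E M \<longleftrightarrow> induced_matching V E M \<and>
     (\<forall>M'. M \<subset> M' \<longrightarrow> \<not> induced_matching V E M')"

definition MIM :: "'a set \<Rightarrow> ('a \<Rightarrow> 'a \<Rightarrow> bool) \<Rightarrow> 'a set set set" where
  "MIM V E = {M. maximal_induced_matching V E M}"

end

theory Submission
  imports Defs
begin

(* Every maximal induced matching of G contains exactly one edge meeting the pendant block B: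
   two such edges are never separated, as B is a clique, and if there were none, an edge inside
   B - {v} could be added, because the vertices of B other than the cutpoint v have no neighbours
   outside B.  The latter holds since a neighbour outside B would give a path leaving B and
   returning to it elsewhere, and B together with a minimal such ear would be a larger 2-connected
   set.  Finally, M \<mapsto> M - {e} is a bijection from the maximal induced matchings containing the
   edge e onto those of G - N[e]; for the (r-1 choose 2) edges inside B - {v} this graph is G - B,
   and for the edges vp with p \<in> N(v) it is G - (N[v] \<union> N[p]). *)

section \<open>Walks and connectivity\<close>

lemma sgraph_sym: "sgraph V E \<Longrightarrow> E u w \<Longrightarrow> E w u"
  by (auto simp: sgraph_def)

lemma sgraph_irrefl: "sgraph V E \<Longrightarrow> E u w \<Longrightarrow> u \<noteq> w"
  by (auto simp: sgraph_def)

lemma sgraph_in: "sgraph V E \<Longrightarrow> E u w \<Longrightarrow> u \<in> V \<and> w \<in> V"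
  by (auto simp: sgraph_def)

lemma reach_refl: "a \<in> S \<Longrightarrow> reach S E a a"
  by (simp add: reach_def)

lemma reach_edge: "a \<in> S \<Longrightarrow> b \<in> S \<Longrightarrow> E a b \<Longrightarrow> reach S E a b"
  unfolding reach_def by (auto intro: r_into_rtrancl)

lemma reach_trans: "reach S E a b \<Longrightarrow> reach S E b c \<Longrightarrow> reach S E a c"
  unfolding reach_def by (meson rtrancl_trans)

lemma reach_in: "reach S E a b \<Longrightarrow> a \<in> S \<and> b \<in> S"
  unfolding reach_def by (auto elim: rtranclE)

lemma reach_induct [consumes 1, case_names refl step]:
  assumes "reach S E a b"
    and "P a"
    and "\<And>y z. reach S E a y \<Longrightarrow> z \<in> S \<Longrightarrow> E y z \<Longrightarrow> P y \<Longrightarrow> P z"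
  shows "P b"
proof -
  have "(a, b) \<in> {(x, y). x \<in> S \<and> y \<in> S \<and> E x y}\<^sup>*"
    using assms(1) unfolding reach_def by blast
  then show ?thesis
  proof (induction rule: rtrancl_induct)
    case base
    show ?case by (rule assms(2))
  next
    case (step y z)
    then show ?case using assms(1,3) unfolding reach_def by blast
  qed
qed

lemma reach_mono:
  assumes "reach S E a b" and "S \<subseteq> T"
  shows "reach T E a b"
  using assms(1)
proof (induction rule: reach_induct)
  case refl
  show ?case using reach_in[OF assms(1)] assms(2) by (auto intro: reach_refl)
next
  case (step y z)
  then show ?case using assms(2) by (meson reach_edge reach_in reach_trans subsetD)
qed

lemma reach_sym:
  assumes "sgraph V E" and "reach S E a b"
  shows "reach S E b a"
  using assms(2)
proof (induction rule: reach_induct)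
  case refl
  show ?case using reach_in[OF assms(2)] by (auto intro: reach_refl)
next
  case (step y z)
  then show ?case by (meson assms(1) reach_edge reach_in reach_trans sgraph_sym)
qed

lemma connected_on_reach: "connected_on S E \<Longrightarrow> a \<in> S \<Longrightarrow> b \<in> S \<Longrightarrow> reach S E a b"
  by (simp add: connected_on_def)

lemma connected_onI_hub:
  assumes sg: "sgraph V E" and "h \<in> S" and to_h: "\<And>t. t \<in> S \<Longrightarrow> reach S E t h"
  shows "connected_on S E"
proof -
  have "reach S E a b" if "a \<in> S" "b \<in> S" for a b
    using to_h[OF that(1)] reach_sym[OF sg to_h[OF that(2)]] by (rule reach_trans)
  then show ?thesis unfolding connected_on_def using assms(2) by blast
qed

lemma connected_on_if_reach_clique:
  assumes sg: "sgraph V E" and C: "C \<subseteq> S" "C \<noteq> {}" "is_clique C E"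
    and reach_C: "\<And>t. t \<in> S \<Longrightarrow> \<exists>c\<in>C. reach S E t c"
  shows "connected_on S E"
proof -
  obtain c0 where c0: "c0 \<in> C" using C by blast
  have "reach S E t c0" if "t \<in> S" for t
  proof -
    obtain c where c: "c \<in> C" "reach S E t c" using reach_C \<open>t \<in> S\<close> by blast
    have "reach S E c c0"
      using C c0 c(1) by (cases "c = c0") (auto intro: reach_refl reach_edge simp: is_clique_def)
    with c(2) show ?thesis by (rule reach_trans)
  qed
  then show ?thesis using connected_onI_hub[OF sg] c0 C(1) by blast
qed

lemma reach_first_hit:
  assumes "reach T E w b" "w \<notin> B" "b \<in> B"
  shows "\<exists>y c. reach (T - B) E w y \<and> c \<in> B \<inter> T \<and> E y c"
proof -
  have "(\<exists>y c. reach (T - B) E w y \<and> c \<in> B \<inter> T \<and> E y c) \<or> reach (T - B) E w b"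
    using assms(1)
  proof (induction rule: reach_induct)
    case refl
    show ?case using reach_in[OF assms(1)] assms(2) by (auto intro: reach_refl)
  next
    case (step y z)
    from step(4) show ?case
    proof
      assume walk: "reach (T - B) E w y"
      show ?case
      proof (cases "z \<in> B")
        case True
        then show ?thesis using walk step(2,3) by blast
      next
        case False
        then have "reach (T - B) E y z"
          using reach_in[OF walk] step(2,3) by (auto intro: reach_edge)
        then show ?thesis using reach_trans[OF walk] by blast
      qed
    qed blast
  qed
  then show ?thesis using assms(3) reach_in[of "T - B" E w b] by blast
qed

lemma connected_on_Diff_component:
  assumes sg: "sgraph V E" and X: "connected_on X E" "x \<in> X"
  shows "connected_on (X - {y. reach (X - {x}) E z y}) E"
proof -
  define K where "K = {y. reach (X - {x}) E z y}"
  have xK: "x \<notin> K" unfolding K_def using reach_in[of "X - {x}" E z x] by blast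
  have "reach (X - K) E y x" if y: "y \<in> X - K" for y
  proof -
    have "reach (X - K) E y x \<or> (t \<notin> K \<and> reach (X - K) E y t)"
      if "reach X E y t" for t
      using that
    proof (induction rule: reach_induct)
      case refl
      show ?case using y by (auto intro: reach_refl)
    next
      case (step t t')
      from step(4) show ?case
      proof
        assume walk: "t \<notin> K \<and> reach (X - K) E y t"
        have "t \<in> X" using reach_in[OF step(1)] by blast
        show ?case
        proof (cases "t' \<in> K")
          case True
          have "t = x"
          proof (rule ccontr)
            assume "t \<noteq> x"
            moreover have "t' \<in> X - {x}"
              using True reach_in[of "X - {x}" E z t'] unfolding K_def by blast
            ultimately have "reach (X - {x}) E t' t"
              using \<open>t \<in> X\<close> sgraph_sym[OF sg step(3)] by (auto intro: reach_edge)
            then have "t \<in> K" using True reach_trans[of "X - {x}" E z t' t] unfolding K_def by blast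
            then show False using walk by blast
          qed
          then show ?thesis using walk by blast
        next
          case False
          then have "reach (X - K) E t t'"
            using \<open>t \<in> X\<close> step(2,3) walk by (auto intro: reach_edge)
          then show ?thesis using reach_trans[of "X - K" E y t t'] walk False by blast
        qed
      qed blast
    qed
    then show ?thesis using connected_on_reach[OF X(1)] X(2) y by blast
  qed
  then show ?thesis
    unfolding K_def[symmetric] using connected_onI_hub[OF sg] X(2) xK by blast
qed

section \<open>Cliques inside blocks\<close>

lemma connected_on_clique_Un:
  assumes sg: "sgraph V E" and C: "is_clique C E" "c \<in> C"
    and X: "connected_on X E" "x \<in> X" "E x c"
  shows "connected_on (C \<union> X) E"
proof (rule connected_on_if_reach_clique[OF sg _ _ C(1)])
  fix t assume t: "t \<in> C \<union> X"
  show "\<exists>c\<in>C. reach (C \<union> X) E t c"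
  proof (cases "t \<in> C")
    case True
    then show ?thesis using reach_refl[OF t] by blast
  next
    case False
    then have "reach (C \<union> X) E t x"
      using reach_mono[OF connected_on_reach[OF X(1)]] t X(2) by blast
    moreover have "reach (C \<union> X) E x c" using C(2) X(2,3) by (auto intro: reach_edge)
    ultimately have "reach (C \<union> X) E t c" by (rule reach_trans)
    then show ?thesis using C(2) by blast
  qed
qed (use C(2) in auto)

lemma two_connected_clique_ear:
  assumes sg: "sgraph V E" and B: "is_clique B E" "card B \<ge> 3"
    and X: "finite X" "X \<inter> B = {}" "connected_on X E"
    and attached_u: "x\<^sub>u \<in> X" "u \<in> B" "E x\<^sub>u u"
    and attached_b: "x\<^sub>b \<in> X" "b \<in> B" "b \<noteq> u" "E x\<^sub>b b"
    and components_attached: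
      "\<And>x z. x \<in> X \<Longrightarrow> z \<in> X - {x} \<Longrightarrow> \<exists>k c. reach (X - {x}) E z k \<and> c \<in> B \<and> E k c"
  shows "two_connected (B \<union> X) E"
proof -
  have fB: "finite B" using B(2) by (metis card.infinite not_numeral_le_zero)
  have "connected_on (B \<union> X) E"
    by (rule connected_on_clique_Un[OF sg B(1) attached_u(2) X(3) attached_u(1,3)])
  moreover have "connected_on (B \<union> X - {y}) E" if y: "y \<in> B" for y
  proof -
    have clique: "is_clique (B - {y}) E" using B(1) by (auto simp: is_clique_def)
    have "B \<union> X - {y} = (B - {y}) \<union> X" using X(2) y by blast
    moreover have "connected_on ((B - {y}) \<union> X) E"
    proof (cases "u = y")
      case True
      then show ?thesis
        using connected_on_clique_Un[OF sg clique _ X(3) attached_b(1,4)] attached_b(2,3) by blast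
    next
      case False
      then show ?thesis
        using connected_on_clique_Un[OF sg clique _ X(3) attached_u(1,3)] attached_u(2) by blast
    qed
    ultimately show ?thesis by simp
  qed
  moreover have "connected_on (B \<union> X - {x}) E" if x: "x \<in> X" for x
  proof (rule connected_on_if_reach_clique[OF sg _ _ B(1)])
    fix t assume t: "t \<in> B \<union> X - {x}"
    show "\<exists>c\<in>B. reach (B \<union> X - {x}) E t c"
    proof (cases "t \<in> B")
      case True
      then show ?thesis using reach_refl[OF t] by blast
    next
      case False
      then obtain k c where kc: "reach (X - {x}) E t k" "c \<in> B" "E k c"
        using components_attached[OF x] t by blast
      have "reach (B \<union> X - {x}) E t k" using reach_mono[OF kc(1)] by (simp add: Diff_mono)
      moreover have "reach (B \<union> X - {x}) E k c"
        using kc X(2) x reach_in[OF kc(1)] by (auto intro: reach_edge)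
      ultimately have "reach (B \<union> X - {x}) E t c" by (rule reach_trans)
      then show ?thesis using kc(2) by blast
    qed
  qed (use X(2) x attached_u in auto)
  moreover have "card (B \<union> X) \<ge> 3" using B(2) card_mono[of "B \<union> X" B] fB X(1) by simp
  ultimately show ?thesis unfolding two_connected_def using fB X(1) by auto
qed

lemma reach_within_component:
  assumes "reach S E a b"
  shows "reach {y. reach S E a y} E a b"
  using assms
proof (induction rule: reach_induct)
  case refl
  show ?case using reach_in[OF assms] reach_refl[of a S E] by (auto intro: reach_refl)
next
  case (step y z)
  have "reach S E y z" using reach_in[OF step(1)] step(2,3) by (auto intro: reach_edge)
  then have "z \<in> {y. reach S E a y}" using reach_trans[OF step(1)] by simp
  then have "reach {y. reach S E a y} E y z"
    using step(1,3) by (auto intro: reach_edge)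
  then show ?case by (rule reach_trans[OF step(4)])
qed

lemma minimal_ear_exists:
  assumes sg: "sgraph V E" and u: "u \<in> B" "w \<in> V - B" "E w u"
    and c: "reach (V - B) E w y" "c \<in> B - {u}" "E y c"
  obtains X x\<^sub>u x\<^sub>b c\<^sub>b where "X \<subseteq> V - B" "connected_on X E"
    "x\<^sub>u \<in> X" "E x\<^sub>u u" "x\<^sub>b \<in> X" "c\<^sub>b \<in> B - {u}" "E x\<^sub>b c\<^sub>b"
    "\<And>x z. x \<in> X \<Longrightarrow> z \<in> X - {x} \<Longrightarrow> \<exists>k c. reach (X - {x}) E z k \<and> c \<in> B \<and> E k c"
proof -
  define ear where "ear X \<longleftrightarrow> X \<subseteq> V - B \<and> connected_on X E \<and> (\<exists>x\<in>X. E x u) \<and>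
    (\<exists>x\<in>X. \<exists>c\<in>B - {u}. E x c)" for X
  define C where "C = {y. reach (V - B) E w y}"
  have "w \<in> C" using u(2) reach_refl[of w "V - B" E] unfolding C_def by blast
  have "connected_on C E"
  proof (rule connected_onI_hub[OF sg \<open>w \<in> C\<close>])
    fix t assume "t \<in> C"
    then have "reach C E w t" using reach_within_component[of "V - B" E w t] unfolding C_def by simp
    then show "reach C E t w" by (rule reach_sym[OF sg])
  qed
  moreover have "C \<subseteq> V - B" using reach_in[of "V - B" E w] unfolding C_def by blast
  moreover have "y \<in> C" using c(1) unfolding C_def by blast
  ultimately have "ear C" unfolding ear_def using \<open>w \<in> C\<close> u(3) c(2,3) by blast
  then obtain X where X: "ear X" and minimal: "\<And>Y. ear Y \<Longrightarrow> card X \<le> card Y"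
    using ex_has_least_nat[of ear C card] by blast
  obtain x\<^sub>u x\<^sub>b c\<^sub>b where X_parts: "X \<subseteq> V - B" "connected_on X E"
    "x\<^sub>u \<in> X" "E x\<^sub>u u" "x\<^sub>b \<in> X" "c\<^sub>b \<in> B - {u}" "E x\<^sub>b c\<^sub>b"
    using X unfolding ear_def by blast
  have "finite X" using X_parts(1) sg finite_subset unfolding sgraph_def by blast
  \<comment> \<open>A component of X - {x} not attached to B could be deleted from X.\<close>
  have "\<exists>k c. reach (X - {x}) E z k \<and> c \<in> B \<and> E k c" if x: "x \<in> X" and z: "z \<in> X - {x}" for x z
  proof (rule ccontr)
    assume detached: "\<nexists>k c. reach (X - {x}) E z k \<and> c \<in> B \<and> E k c"
    define K where "K = {y. reach (X - {x}) E z y}"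
    have "x\<^sub>u \<notin> K" "x\<^sub>b \<notin> K"
      using detached u(1) X_parts(4,6,7) unfolding K_def by blast+
    moreover have "connected_on (X - K) E"
      unfolding K_def by (rule connected_on_Diff_component[OF sg X_parts(2) x])
    ultimately have "ear (X - K)"
      using X_parts unfolding ear_def by blast
    moreover have "card (X - K) < card X"
    proof (rule psubset_card_mono[OF \<open>finite X\<close>])
      have "z \<in> K" using z reach_refl[of z "X - {x}" E] unfolding K_def by blast
      then show "X - K \<subset> X" using z by blast
    qed
    ultimately show False using minimal[of "X - K"] by linarith
  qed
  with X_parts show ?thesis using that by blast
qed

lemma nbhd_subset_block:
  assumes sg: "sgraph V E" and blk: "is_block V E B" and cl: "is_clique B E"
    and u: "u \<in> B" "\<not> cutpoint V E u"
  shows "nbhd V E u \<subseteq> B"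
proof
  fix w assume w: "w \<in> nbhd V E u"
  show "w \<in> B"
  proof (rule ccontr)
    assume wB: "w \<notin> B"
    have BV: "B \<subseteq> V" and B3: "card B \<ge> 3"
      and maximal: "\<And>B'. B \<subset> B' \<Longrightarrow> B' \<subseteq> V \<Longrightarrow> \<not> two_connected B' E"
      using blk unfolding is_block_def two_connected_def by blast+
    have wV: "w \<in> V" and Euw: "E u w" using w unfolding nbhd_def by blast+
    have "B \<noteq> {u}" using B3 by auto
    then obtain b where b: "b \<in> B" "b \<noteq> u" using u(1) by blast
    have "reach V E w u" using wV BV u(1) sgraph_sym[OF sg Euw] by (auto intro: reach_edge)
    moreover have "reach V E u b" using BV u(1) b cl by (auto intro: reach_edge simp: is_clique_def)
    ultimately have "reach V E w b" by (rule reach_trans)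
    moreover have "u \<in> V" "w \<in> V - {u}" "b \<in> V - {u}" using wV wB u(1) b BV by blast+
    ultimately have "reach (V - {u}) E w b" using u(2) unfolding cutpoint_def by blast
    then obtain y c where y: "reach (V - {u} - B) E w y" and c: "c \<in> B \<inter> (V - {u})" "E y c"
      using reach_first_hit[OF _ wB b(1)] by blast
    have "reach (V - B) E w y" using reach_mono[OF y] by blast
    moreover have "w \<in> V - B" "c \<in> B - {u}" using wV wB c(1) by blast+
    ultimately obtain X x\<^sub>u x\<^sub>b c\<^sub>b where X: "X \<subseteq> V - B" "connected_on X E"
        "x\<^sub>u \<in> X" "E x\<^sub>u u" "x\<^sub>b \<in> X" "c\<^sub>b \<in> B - {u}" "E x\<^sub>b c\<^sub>b"
      and components_attached:
        "\<And>x z. x \<in> X \<Longrightarrow> z \<in> X - {x} \<Longrightarrow> \<exists>k c. reach (X - {x}) E z k \<and> c \<in> B \<and> E k c"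
      using minimal_ear_exists[OF sg u(1) _ sgraph_sym[OF sg Euw] _ _ c(2)] by blast
    have "finite X" using X(1) sg finite_subset unfolding sgraph_def by blast
    have "X \<inter> B = {}" "c\<^sub>b \<in> B" "c\<^sub>b \<noteq> u" using X(1,6) by blast+
    then have "two_connected (B \<union> X) E"
      using two_connected_clique_ear[OF sg cl B3 \<open>finite X\<close> _ X(2,3) u(1) X(4,5) _ _ X(7)]
        components_attached by blast
    moreover have "B \<subset> B \<union> X" using X(1,3) by blast
    moreover have "B \<union> X \<subseteq> V" using BV X(1) by blast
    ultimately show False using maximal by blast
  qed
qed

section \<open>Induced matchings\<close>

definition separated :: "('a \<Rightarrow> 'a \<Rightarrow> bool) \<Rightarrow> 'a set \<Rightarrow> 'a set \<Rightarrow> bool" where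
  "separated E e f \<longleftrightarrow> e \<inter> f = {} \<and> (\<forall>x\<in>e. \<forall>y\<in>f. \<not> E x y)"

definition cnbhd_set :: "'a set \<Rightarrow> ('a \<Rightarrow> 'a \<Rightarrow> bool) \<Rightarrow> 'a set \<Rightarrow> 'a set" where
  "cnbhd_set V E e = (\<Union>x\<in>e. cnbhd V E x)"

lemma separated_sym: "sgraph V E \<Longrightarrow> separated E e f \<longleftrightarrow> separated E f e"
  unfolding separated_def by (auto dest: sgraph_sym)

lemma subset_Diff_cnbhd_set_iff: "f \<subseteq> V - cnbhd_set V E e \<longleftrightarrow> f \<subseteq> V \<and> separated E e f"
  by (auto simp: cnbhd_set_def cnbhd_def nbhd_def separated_def)

lemma mem_edges_iff: "e \<in> edges W E \<longleftrightarrow> (\<exists>a b. e = {a, b} \<and> a \<in> W \<and> b \<in> W \<and> E a b)"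
  by (auto simp: edges_def)

lemma edges_mono_iff: "U \<subseteq> V \<Longrightarrow> e \<in> edges U E \<longleftrightarrow> e \<in> edges V E \<and> e \<subseteq> U"
  by (auto simp: edges_def)

lemma finite_edges: "finite W \<Longrightarrow> finite (edges W E)"
  by (rule finite_subset[of _ "Pow W"]) (auto simp: edges_def)

lemma edge_subset: "e \<in> edges W E \<Longrightarrow> e \<subseteq> W"
  by (auto simp: edges_def)

lemma edge_nonempty: "e \<in> edges W E \<Longrightarrow> e \<noteq> {}"
  by (auto simp: edges_def)

lemma edge_other_end:
  assumes "sgraph V E" "e \<in> edges W E" "x \<in> e"
  obtains y where "e = {x, y}" "E x y"
  using assms by (auto simp: edges_def dest: sgraph_sym)

lemma induced_matching_iff:
  assumes sg: "sgraph V E"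
  shows "induced_matching W E M \<longleftrightarrow> M \<subseteq> edges W E \<and> pairwise (separated E) M"
proof
  assume im: "induced_matching W E M"
  have "separated E e f" if ef: "e \<in> M" "f \<in> M" "e \<noteq> f" for e f
  proof -
    have disjoint: "e \<inter> f = {}" using im ef unfolding induced_matching_def by blast
    have "\<not> E x y" if xy: "x \<in> e" "y \<in> f" for x y
    proof
      assume "E x y"
      have "e \<in> edges W E" using im ef(1) unfolding induced_matching_def by blast
      then obtain x' where x': "e = {x, x'}" "E x x'" using edge_other_end[OF sg _ xy(1)] by metis
      have "card {z \<in> \<Union>M. E x z} = 1" using im ef(1) xy(1) unfolding induced_matching_def by blast
      then obtain z where z: "{z \<in> \<Union>M. E x z} = {z}" by (metis One_nat_def card_1_singleton_iff)
      have "x' \<in> {z \<in> \<Union>M. E x z}" "y \<in> {z \<in> \<Union>M. E x z}"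
        using x' ef \<open>E x y\<close> xy by blast+
      then have "x' = y" unfolding z by blast
      then show False using disjoint x' xy by blast
    qed
    then show ?thesis using disjoint unfolding separated_def by blast
  qed
  moreover have "M \<subseteq> edges W E" using im unfolding induced_matching_def by blast
  ultimately show "M \<subseteq> edges W E \<and> pairwise (separated E) M" unfolding pairwise_def by blast
next
  assume M: "M \<subseteq> edges W E \<and> pairwise (separated E) M"
  have "card {y \<in> \<Union>M. E x y} = 1" if "e \<in> M" "x \<in> e" for e x
  proof -
    have "e \<in> edges W E" using M \<open>e \<in> M\<close> by blast
    then obtain x' where x': "e = {x, x'}" "E x x'" using edge_other_end[OF sg _ \<open>x \<in> e\<close>] by metis
    have "y = x'" if y: "y \<in> f" "f \<in> M" "E x y" for y f
    proof (cases "f = e")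
      case True
      then show ?thesis using y x' sgraph_irrefl[OF sg y(3)] by blast
    next
      case False
      then have "separated E e f" using M y(2) \<open>e \<in> M\<close> unfolding pairwise_def by blast
      then show ?thesis using y \<open>x \<in> e\<close> unfolding separated_def by blast
    qed
    then have "{y \<in> \<Union>M. E x y} = {x'}" using x' \<open>e \<in> M\<close> by blast
    then show ?thesis by simp
  qed
  then have "\<forall>x\<in>\<Union>M. card {y \<in> \<Union>M. E x y} = 1" by blast
  moreover have "\<forall>e\<in>M. \<forall>f\<in>M. e \<noteq> f \<longrightarrow> e \<inter> f = {}"
    using M unfolding pairwise_def separated_def by blast
  ultimately show "induced_matching W E M" using M unfolding induced_matching_def by blast
qed

lemma induced_matching_subset:
  "sgraph V E \<Longrightarrow> induced_matching W E M \<Longrightarrow> M' \<subseteq> M \<Longrightarrow> induced_matching W E M'"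
  by (auto simp: induced_matching_iff intro: pairwise_subset)

lemma maximal_induced_matching_iff:
  assumes sg: "sgraph V E"
  shows "maximal_induced_matching W E M \<longleftrightarrow> induced_matching W E M \<and>
    (\<forall>g\<in>edges W E. g \<notin> M \<longrightarrow> \<not> induced_matching W E (insert g M))"
proof -
  have "\<exists>g\<in>edges W E. g \<notin> M \<and> induced_matching W E (insert g M)"
    if "M \<subset> M'" "induced_matching W E M'" for M'
  proof -
    obtain g where "g \<in> M'" "g \<notin> M" using \<open>M \<subset> M'\<close> by blast
    moreover have "induced_matching W E (insert g M)"
      using induced_matching_subset[OF sg \<open>induced_matching W E M'\<close>] \<open>g \<in> M'\<close> \<open>M \<subset> M'\<close> by blast
    moreover have "g \<in> edges W E" using that \<open>g \<in> M'\<close> unfolding induced_matching_iff[OF sg] by blast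
    ultimately show ?thesis by blast
  qed
  then show ?thesis unfolding maximal_induced_matching_def by blast
qed

lemma finite_MIM: "finite W \<Longrightarrow> finite (MIM W E)"
  by (rule finite_subset[of _ "Pow (Pow W)"])
    (auto simp: MIM_def maximal_induced_matching_def induced_matching_def edges_def)

lemma induced_matching_insert_iff:
  assumes sg: "sgraph V E" and e: "e \<in> edges V E" "e \<notin> M"
  shows "induced_matching V E (insert e M) \<longleftrightarrow> induced_matching (V - cnbhd_set V E e) E M"
proof -
  let ?U = "V - cnbhd_set V E e"
  have "f \<in> edges ?U E \<longleftrightarrow> f \<in> edges V E \<and> separated E e f" for f
    using edges_mono_iff[of ?U V f E] subset_Diff_cnbhd_set_iff[of f V E e] edge_subset[of f V E]
    by blast
  then have edges_U: "M \<subseteq> edges ?U E \<longleftrightarrow> M \<subseteq> edges V E \<and> (\<forall>f\<in>M. separated E e f)"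
    by blast
  have "(\<forall>f. f \<in> M \<and> f \<noteq> e \<longrightarrow> separated E e f \<and> separated E f e) \<longleftrightarrow> (\<forall>f\<in>M. separated E e f)"
    using e(2) separated_sym[OF sg, of e] by blast
  then have "induced_matching V E (insert e M) \<longleftrightarrow>
      e \<in> edges V E \<and> M \<subseteq> edges V E \<and> (\<forall>f\<in>M. separated E e f) \<and> pairwise (separated E) M"
    unfolding induced_matching_iff[OF sg] pairwise_insert insert_subset by blast
  also have "\<dots> \<longleftrightarrow> induced_matching ?U E M"
    unfolding induced_matching_iff[OF sg] edges_U using e(1) by blast
  finally show ?thesis .
qed

lemma edge_notin_edges_Diff_cnbhd_set: "e \<in> edges V E \<Longrightarrow> e \<notin> edges (V - cnbhd_set V E e) E"
proof
  assume "e \<in> edges V E" "e \<in> edges (V - cnbhd_set V E e) E"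
  then have "separated E e e" "e \<noteq> {}"
    using edge_subset subset_Diff_cnbhd_set_iff edge_nonempty by metis+
  then show False unfolding separated_def by blast
qed

lemma maximal_induced_matching_insert_iff:
  assumes sg: "sgraph V E" and e: "e \<in> edges V E" "e \<notin> M"
  shows "maximal_induced_matching V E (insert e M) \<longleftrightarrow>
    maximal_induced_matching (V - cnbhd_set V E e) E M"
proof -
  let ?U = "V - cnbhd_set V E e"
  have e_U: "e \<notin> edges ?U E" by (rule edge_notin_edges_Diff_cnbhd_set[OF e(1)])
  have swap: "induced_matching V E (insert g (insert e M)) \<longleftrightarrow> induced_matching ?U E (insert g M)"
    if "g \<noteq> e" for g
    using induced_matching_insert_iff[OF sg e(1), of "insert g M"] e(2) that
    by (simp add: insert_commute)
  have edge_U: "g \<in> edges ?U E" if "induced_matching ?U E (insert g M)" for g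
    using that unfolding induced_matching_iff[OF sg] by blast
  have edge_V: "g \<in> edges V E" if "g \<in> edges ?U E" for g
    using that edges_mono_iff[of ?U V] by blast
  show ?thesis
    unfolding maximal_induced_matching_iff[OF sg] induced_matching_insert_iff[OF sg e]
  proof (rule conj_cong[OF refl], intro iffI ballI impI)
    fix g
    assume max_V: "\<forall>g\<in>edges V E. g \<notin> insert e M \<longrightarrow> \<not> induced_matching V E (insert g (insert e M))"
      and g: "g \<in> edges ?U E" "g \<notin> M"
    have "g \<noteq> e" using g(1) e_U by blast
    then show "\<not> induced_matching ?U E (insert g M)"
      using max_V edge_V[OF g(1)] g(2) swap[of g] by blast
  next
    fix g
    assume max_U: "\<forall>g\<in>edges ?U E. g \<notin> M \<longrightarrow> \<not> induced_matching ?U E (insert g M)"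
      and g: "g \<in> edges V E" "g \<notin> insert e M"
    show "\<not> induced_matching V E (insert g (insert e M))"
      using max_U g edge_U[of g] swap[of g] by blast
  qed
qed

lemma card_MIM_containing:
  assumes sg: "sgraph V E" and e: "e \<in> edges V E"
  shows "card {M \<in> MIM V E. e \<in> M} = card (MIM (V - cnbhd_set V E e) E)"
proof -
  let ?U = "V - cnbhd_set V E e"
  have e_notin: "e \<notin> M" if "M \<in> MIM ?U E" for M
    using that edge_notin_edges_Diff_cnbhd_set[OF e]
    unfolding MIM_def maximal_induced_matching_def induced_matching_iff[OF sg] by blast
  have "bij_betw (insert e) (MIM ?U E) {M \<in> MIM V E. e \<in> M}"
  proof (rule bij_betw_imageI)
    show "inj_on (insert e) (MIM ?U E)"
      using e_notin by (auto intro!: inj_onI simp: insert_ident)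
    show "insert e ` MIM ?U E = {M \<in> MIM V E. e \<in> M}"
    proof (intro equalityI subsetI)
      fix M assume "M \<in> insert e ` MIM ?U E"
      then obtain M' where "M' \<in> MIM ?U E" "M = insert e M'" by blast
      then show "M \<in> {M \<in> MIM V E. e \<in> M}"
        using maximal_induced_matching_insert_iff[OF sg e e_notin] unfolding MIM_def by blast
    next
      fix M assume M: "M \<in> {M \<in> MIM V E. e \<in> M}"
      then have "insert e (M - {e}) \<in> MIM V E" by (simp add: insert_absorb)
      then have "M - {e} \<in> MIM ?U E"
        using maximal_induced_matching_insert_iff[OF sg e, of "M - {e}"] unfolding MIM_def by blast
      moreover have "M = insert e (M - {e})" using M by blast
      ultimately show "M \<in> insert e ` MIM ?U E" by (rule rev_image_eqI)
    qed
  qed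
  then show ?thesis by (simp add: bij_betw_same_card)
qed

section \<open>Pendant cliques\<close>

lemma card_eq_sum_card_containing:
  assumes "finite \<M>" "finite G" and unique: "\<And>M. M \<in> \<M> \<Longrightarrow> \<exists>!g. g \<in> G \<and> g \<in> M"
  shows "card \<M> = (\<Sum>g\<in>G. card {M \<in> \<M>. g \<in> M})"
proof -
  have "\<M> = (\<Union>g\<in>G. {M \<in> \<M>. g \<in> M})" using unique by blast
  moreover have "card (\<Union>g\<in>G. {M \<in> \<M>. g \<in> M}) = (\<Sum>g\<in>G. card {M \<in> \<M>. g \<in> M})"
    using assms by (intro card_UN_disjoint) auto
  ultimately show ?thesis by simp
qed

locale pendant_clique =
  fixes V :: "'a set" and E :: "'a \<Rightarrow> 'a \<Rightarrow> bool" and B :: "'a set" and v :: 'a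
  assumes sgraph: "sgraph V E" and B_subset: "B \<subseteq> V" and clique: "is_clique B E"
    and v_in_B: "v \<in> B" and card_B: "card B \<ge> 3"
    and nbhd_subset: "\<And>a. a \<in> B - {v} \<Longrightarrow> nbhd V E a \<subseteq> B"
begin

lemma adjacent_in_B: "a \<in> B \<Longrightarrow> b \<in> B \<Longrightarrow> a \<noteq> b \<Longrightarrow> E a b"
  using clique unfolding is_clique_def by blast

lemma neighbour_in_B: "a \<in> B - {v} \<Longrightarrow> E a y \<Longrightarrow> y \<in> B"
  using nbhd_subset sgraph_in[OF sgraph] unfolding nbhd_def by blast

lemma edges_meeting_B:
  "{g \<in> edges V E. g \<inter> B \<noteq> {}} = {e. e \<subseteq> B - {v} \<and> card e = 2} \<union> (\<lambda>p. {v, p}) ` nbhd V E v"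
proof (intro equalityI subsetI)
  fix g assume "g \<in> {g \<in> edges V E. g \<inter> B \<noteq> {}}"
  then obtain a b where g: "g = {a, b}" "E a b" "a \<in> V" "b \<in> V" and meets: "g \<inter> B \<noteq> {}"
    unfolding mem_edges_iff by blast
  have Eba: "E b a" using sgraph_sym[OF sgraph g(2)] .
  show "g \<in> {e. e \<subseteq> B - {v} \<and> card e = 2} \<union> (\<lambda>p. {v, p}) ` nbhd V E v"
  proof (cases "v \<in> g")
    case True
    then have "g = {v, b} \<and> b \<in> nbhd V E v \<or> g = {v, a} \<and> a \<in> nbhd V E v"
      using g Eba unfolding nbhd_def by blast
    then show ?thesis by blast
  next
    case False
    then have "g \<subseteq> B - {v}" using meets g Eba neighbour_in_B by blast
    moreover have "card g = 2" using g sgraph_irrefl[OF sgraph g(2)] by simp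
    ultimately show ?thesis by blast
  qed
next
  fix g assume "g \<in> {e. e \<subseteq> B - {v} \<and> card e = 2} \<union> (\<lambda>p. {v, p}) ` nbhd V E v"
  then show "g \<in> {g \<in> edges V E. g \<inter> B \<noteq> {}}"
  proof
    assume "g \<in> {e. e \<subseteq> B - {v} \<and> card e = 2}"
    then obtain x y where "g = {x, y}" "x \<noteq> y" "x \<in> B - {v}" "y \<in> B - {v}"
      by (auto simp: card_2_iff)
    then show ?thesis using clique B_subset unfolding is_clique_def mem_edges_iff by blast
  next
    assume "g \<in> (\<lambda>p. {v, p}) ` nbhd V E v"
    then show ?thesis using v_in_B B_subset unfolding nbhd_def mem_edges_iff by blast
  qed
qed

lemma MIM_unique_edge_meeting_B:
  assumes M: "M \<in> MIM V E"
  shows "\<exists>!g. g \<in> {g \<in> edges V E. g \<inter> B \<noteq> {}} \<and> g \<in> M"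
proof -
  have max: "maximal_induced_matching V E M" using M unfolding MIM_def by blast
  then have im: "M \<subseteq> edges V E" "pairwise (separated E) M"
    unfolding maximal_induced_matching_iff[OF sgraph] induced_matching_iff[OF sgraph] by blast+
  have at_most_one: "g = g'"
    if gg': "g \<in> M" "g' \<in> M" "g \<inter> B \<noteq> {}" "g' \<inter> B \<noteq> {}" for g g'
  proof (rule ccontr)
    assume "g \<noteq> g'"
    then have sep: "separated E g g'" using im(2) gg'(1,2) unfolding pairwise_def by blast
    obtain a b where ab: "a \<in> g \<inter> B" "b \<in> g' \<inter> B" using gg'(3,4) by blast
    then have "a \<noteq> b" using sep unfolding separated_def by blast
    then have "E a b" using ab adjacent_in_B by blast
    then show False using sep ab unfolding separated_def by blast
  qed
  have "\<exists>g\<in>M. g \<inter> B \<noteq> {}"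
  proof (rule ccontr)
    assume avoid: "\<not> (\<exists>g\<in>M. g \<inter> B \<noteq> {})"
    have "card (B - {v}) \<ge> 2" using card_B v_in_B by (simp add: card_Diff_singleton)
    then obtain e where "e \<subseteq> B - {v}" "card e = 2" by (meson obtain_subset_with_card_n)
    then obtain x y where xy: "x \<in> B - {v}" "y \<in> B - {v}" "x \<noteq> y"
      by (auto simp: card_2_iff)
    have edge: "{x, y} \<in> edges V E"
      using xy adjacent_in_B[of x y] B_subset unfolding mem_edges_iff by blast
    have "separated E {x, y} f" if "f \<in> M" for f
    proof -
      have "f \<inter> B = {}" using avoid that by auto
      moreover have "\<not> E a z" if "a \<in> {x, y}" "z \<in> f" for a z
        using neighbour_in_B[of a z] xy that \<open>f \<inter> B = {}\<close> by auto
      ultimately show ?thesis using xy unfolding separated_def by auto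
    qed
    then have "induced_matching V E (insert {x, y} M)"
      using edge im separated_sym[OF sgraph, of "{x, y}"]
      unfolding induced_matching_iff[OF sgraph] pairwise_insert by auto
    moreover have "{x, y} \<notin> M" using avoid xy(1) by auto
    ultimately show False
      using max edge unfolding maximal_induced_matching_iff[OF sgraph] by blast
  qed
  then obtain g where "g \<in> M" "g \<inter> B \<noteq> {}" by blast
  then show ?thesis using at_most_one im(1) by (intro ex1I[of _ g]) auto
qed

lemma cnbhd_set_inner_edge:
  assumes "e \<subseteq> B - {v}" "card e = 2"
  shows "cnbhd_set V E e = B"
proof -
  obtain x y where e: "e = {x, y}" "x \<noteq> y" using assms(2) by (auto simp: card_2_iff)
  have "cnbhd V E a \<subseteq> B" if "a \<in> e" for a
    using that assms(1) nbhd_subset[of a] unfolding cnbhd_def by blast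
  then have "cnbhd_set V E e \<subseteq> B" unfolding cnbhd_set_def by blast
  moreover have "x \<in> B" using e assms(1) by blast
  then have "B \<subseteq> cnbhd V E x" using clique B_subset
    unfolding cnbhd_def nbhd_def is_clique_def by auto
  then have "B \<subseteq> cnbhd_set V E e" unfolding cnbhd_set_def e(1) by blast
  ultimately show ?thesis by blast
qed

lemma inner_or_spoke_in_edges:
  "e \<in> {e. e \<subseteq> B - {v} \<and> card e = 2} \<union> (\<lambda>p. {v, p}) ` nbhd V E v \<Longrightarrow> e \<in> edges V E"
  using edges_meeting_B by blast

lemma sum_card_MIM_containing_inner:
  "(\<Sum>e\<in>{e. e \<subseteq> B - {v} \<and> card e = 2}. card {M \<in> MIM V E. e \<in> M}) =
    (card (B - {v}) choose 2) * card (MIM (V - B) E)"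
proof -
  have "finite B" using sgraph B_subset finite_subset unfolding sgraph_def by blast
  have "card {M \<in> MIM V E. e \<in> M} = card (MIM (V - B) E)" if "e \<subseteq> B - {v}" "card e = 2" for e
    using card_MIM_containing[OF sgraph inner_or_spoke_in_edges] cnbhd_set_inner_edge that by simp
  then show ?thesis using \<open>finite B\<close> by (simp add: n_subsets)
qed

lemma sum_card_MIM_containing_spokes:
  "(\<Sum>g\<in>(\<lambda>p. {v, p}) ` nbhd V E v. card {M \<in> MIM V E. g \<in> M}) =
    (\<Sum>p\<in>nbhd V E v. card (MIM (V - (cnbhd V E v \<union> cnbhd V E p)) E))"
proof -
  have "inj_on (\<lambda>p. {v, p}) (nbhd V E v)"
    by (auto simp: inj_on_def nbhd_def doubleton_eq_iff dest: sgraph_irrefl[OF sgraph])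
  moreover have "card {M \<in> MIM V E. {v, p} \<in> M} = card (MIM (V - (cnbhd V E v \<union> cnbhd V E p)) E)"
    if "p \<in> nbhd V E v" for p
    using card_MIM_containing[OF sgraph inner_or_spoke_in_edges] that by (simp add: cnbhd_set_def)
  ultimately show ?thesis by (simp add: sum.reindex)
qed

lemma card_MIM_pendant_clique:
  "card (MIM V E) = (card (B - {v}) choose 2) * card (MIM (V - B) E)
     + (\<Sum>p\<in>nbhd V E v. card (MIM (V - (cnbhd V E v \<union> cnbhd V E p)) E))"
proof -
  define inner where "inner = {e. e \<subseteq> B - {v} \<and> card e = 2}"
  define spokes where "spokes = (\<lambda>p. {v, p}) ` nbhd V E v"
  define containing where "containing g = card {M \<in> MIM V E. g \<in> M}" for g
  have "finite V" using sgraph unfolding sgraph_def by blast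
  have meeting: "{g \<in> edges V E. g \<inter> B \<noteq> {}} = inner \<union> spokes"
    unfolding inner_def spokes_def by (rule edges_meeting_B)
  have "finite (inner \<union> spokes)" unfolding meeting[symmetric] using finite_edges[OF \<open>finite V\<close>] by simp
  have "card (MIM V E) = (\<Sum>g\<in>inner \<union> spokes. containing g)"
    unfolding containing_def meeting[symmetric]
    using finite_MIM[OF \<open>finite V\<close>] finite_edges[OF \<open>finite V\<close>] MIM_unique_edge_meeting_B
    by (intro card_eq_sum_card_containing) simp_all
  also have "\<dots> = (\<Sum>g\<in>inner. containing g) + (\<Sum>g\<in>spokes. containing g)"
    using \<open>finite (inner \<union> spokes)\<close> by (intro sum.union_disjoint) (auto simp: inner_def spokes_def)
  finally show ?thesis
    unfolding containing_def inner_def spokes_def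
    using sum_card_MIM_containing_inner sum_card_MIM_containing_spokes by simp
qed

end

theorem corollary2p8:
  fixes V :: "'a set" and E :: "'a \<Rightarrow> 'a \<Rightarrow> bool" and B :: "'a set" and r :: nat and v :: 'a
  assumes "sgraph V E"
    and "pendant_block V E B"
    and "card B = r" and "is_clique B E"
    and "r \<ge> 3"
    and "v \<in> B" and "cutpoint V E v"
  shows "card (MIM V E) =
           ((r - 1) choose 2) * card (MIM (V - B) E)
           + (\<Sum>p\<in>nbhd V E v. card (MIM (V - (cnbhd V E v \<union> cnbhd V E p)) E))"
proof -
  have block: "is_block V E B" and "card {u \<in> B. cutpoint V E u} = 1"
    using assms(2) unfolding pendant_block_def by blast+
  then obtain z where "{u \<in> B. cutpoint V E u} = {z}" by (auto simp: card_1_singleton_iff)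
  moreover have "v \<in> {u \<in> B. cutpoint V E u}" using assms(6,7) by blast
  ultimately have "{u \<in> B. cutpoint V E u} = {v}" by simp
  then have "nbhd V E a \<subseteq> B" if "a \<in> B - {v}" for a
    using nbhd_subset_block[OF assms(1) block assms(4)] that by blast
  moreover have "B \<subseteq> V" using block unfolding is_block_def by blast
  ultimately interpret pendant_clique V E B v
    using assms(1,3-6) by unfold_locales auto
  have "finite B" using assms(3,5) card.infinite by fastforce
  then have "card (B - {v}) = r - 1" using assms(3,6) by (simp add: card_Diff_singleton)
  then show ?thesis using card_MIM_pendant_clique by simp
qed

end
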